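(* For all $n\ge1$, $p_n(1221,1232)=p_n(1221,1223)=1+(n-1)2^{n-2}$.
   Context: Set partitions of $[n]$ are written in canonical sequential form (restricted growth words $\pi_1\cdots\pi_n$ with $\pi_1=1$, $\pi_{i+1}\le\max(\pi_1,\dots,\pi_i)+1$). A partition contains a pattern if it has a subsequence order-isomorphic to it; $p_n(T)$ counts partitions of $[n]$ avoiding every pattern in $T$. *)

theory Defs
  imports Main "HOL-Library.Sublist"
begin

text \<open>Canonical sequential form (restricted growth word) of a set partition of [n]:
  a word pi_1 ... pi_n of positive integers with pi_1 = 1 and
  pi_(i+1) <= max(pi_1,...,pi_i) + 1.  Positions are 0-based in the list.\<close>
definition is_rgw :: "nat \<Rightarrow> nat list \<Rightarrow> bool" where
  "is_rgw n w \<longleftrightarrow> length w = n \<and> (\<forall>x\<in>set w. 1 \<le> x) \<and>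
     (n > 0 \<longrightarrow> w ! 0 = 1) \<and>
     (\<forall>i. i + 1 < n \<longrightarrow> w ! (i + 1) \<le> Max (set (take (i + 1) w)) + 1)"

definition order_iso :: "nat list \<Rightarrow> nat list \<Rightarrow> bool" where
  "order_iso s p \<longleftrightarrow> length s = length p \<and>
     (\<forall>a < length s. \<forall>b < length s. (s ! a < s ! b \<longleftrightarrow> p ! a < p ! b) \<and>
                                     (s ! a = s ! b \<longleftrightarrow> p ! a = p ! b))"

definition contains :: "nat list \<Rightarrow> nat list \<Rightarrow> bool" where
  "contains w p \<longleftrightarrow> (\<exists>s. subseq s w \<and> order_iso s p)"

definition pn :: "nat \<Rightarrow> nat list set \<Rightarrow> nat" where
  "pn n T = card {w. is_rgw n w \<and> (\<forall>p\<in>T. \<not> contains w p)}"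

end

theory Submission
  imports Defs
begin

text \<open>Build restricted growth words letter by letter and call a word repeating if some letter
  b > 1 occurs twice.  In both classes every non-repeating word is an avoider and can be continued
  without repetition exactly by 1 or by a new maximum; hence there are 2^(n-1) non-repeating words of
  length n, and the sum of (max - 1) over them is (n-1) 2^(n-2).
  For 1221, 1232 the letters that may follow an avoider w are max w, max w + 1, and also 1 if w is
  non-repeating.  For 1221, 1223 they are 1, ..., max w + 1 if w is non-repeating, and otherwise only
  the repeated letter b > 1, which is unique.  The numbers R_n of repeating avoiders therefore satisfy
  R_(n+1) = 2 R_n + 2^(n-1) - 1, respectively R_(n+1) = R_n + (n-1) 2^(n-2), and in both cases
  R_n + 2^(n-1) = 1 + (n-1) 2^(n-2).\<close>

lemma subseq_snoc_iff:
  "subseq xs (ys @ [z]) \<longleftrightarrow> subseq xs ys \<or> (\<exists>xs'. xs = xs' @ [z] \<and> subseq xs' ys)"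
proof
  assume "subseq xs (ys @ [z])"
  then obtain xs1 xs2 where "xs = xs1 @ xs2" "subseq xs1 ys" "subseq xs2 [z]"
    by (auto simp: subseq_append_iff)
  moreover have "xs2 = [] \<or> xs2 = [z]"
    using \<open>subseq xs2 [z]\<close> by (cases xs2) (auto split: if_splits)
  ultimately show "subseq xs ys \<or> (\<exists>xs'. xs = xs' @ [z] \<and> subseq xs' ys)" by auto
qed (auto intro: subseq_rev_drop_many list_emb_append_mono)

lemma set_mono_subseq: "subseq xs ys \<Longrightarrow> set xs \<subseteq> set ys"
  by (auto dest: list_emb_set)

lemma subseq_pair_snoc_iff: "subseq [a,b] (w @ [z]) \<longleftrightarrow> subseq [a,b] w \<or> (b = z \<and> a \<in> set w)"
  by (auto simp: subseq_snoc_iff subseq_singleton_left)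

lemma sum_UN_snoc:
  assumes "finite X" "\<And>w. w \<in> X \<Longrightarrow> finite (F w)"
  shows "(\<Sum>v\<in>(\<Union>w\<in>X. (\<lambda>x. w @ [x]) ` F w). h v) = (\<Sum>w\<in>X. \<Sum>x\<in>F w. h (w @ [x]))"
proof -
  have "(\<Sum>v\<in>(\<Union>w\<in>X. (\<lambda>x. w @ [x]) ` F w). h v) = (\<Sum>w\<in>X. \<Sum>v\<in>(\<lambda>x. w @ [x]) ` F w. h v)"
    by (rule sum.UNION_disjoint) (use assms in auto)
  also have "\<dots> = (\<Sum>w\<in>X. \<Sum>x\<in>F w. h (w @ [x]))"
    by (intro sum.cong refl, subst sum.reindex) (auto simp: inj_on_def)
  finally show ?thesis .
qed

lemma sum_if_filter:
  "finite A \<Longrightarrow> (\<Sum>x\<in>A. if P x then f x else g x) = (\<Sum>x | x \<in> A \<and> P x. f x) + (\<Sum>x | x \<in> A \<and> \<not> P x. g x)"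
  by (simp add: sum.If_cases Collect_conj_eq Int_commute Compl_eq)

lemma card_filter_partition: "finite A \<Longrightarrow> card A = card {x \<in> A. P x} + card {x \<in> A. \<not> P x}"
  using sum_if_filter[of A P "\<lambda>_. 1::nat" "\<lambda>_. 1"] by simp

lemma double_mult_power_pred: "2 * (k * 2 ^ (k - 1)) = k * (2::nat) ^ k"
  by (cases k) simp_all

lemma order_iso_1221_iff: "order_iso [a,b,c,d] [1,2,2,1] \<longleftrightarrow> a < b \<and> c = b \<and> d = a"
  unfolding order_iso_def by (simp add: All_less_Suc2) linarith

lemma order_iso_1232_iff: "order_iso [a,b,c,d] [1,2,3,2] \<longleftrightarrow> a < b \<and> b < c \<and> d = b"
  unfolding order_iso_def by (simp add: All_less_Suc2) linarith

lemma order_iso_1223_iff: "order_iso [a,b,c,d] [1,2,2,3] \<longleftrightarrow> a < b \<and> c = b \<and> b < d"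
  unfolding order_iso_def by (simp add: All_less_Suc2) linarith

lemma contains_length_4_iff:
  assumes "length p = 4"
  shows "contains w p \<longleftrightarrow> (\<exists>a b c d. subseq [a,b,c,d] w \<and> order_iso [a,b,c,d] p)"
proof -
  have "\<exists>a b c d. s = [a,b,c,d]" if "length s = 4" for s :: "nat list"
    using that by (cases s; cases "tl s"; cases "tl (tl s)"; cases "tl (tl (tl s))") auto
  moreover have "order_iso s p \<Longrightarrow> length s = 4" for s
    using assms by (simp add: order_iso_def)
  ultimately show ?thesis
    unfolding contains_def by blast
qed

lemma contains_1221_iff: "contains w [1,2,2,1] \<longleftrightarrow> (\<exists>a b. a < b \<and> subseq [a,b,b,a] w)"
  using contains_length_4_iff[of "[1,2,2,1]" w] order_iso_1221_iff by auto

lemma contains_1232_iff: "contains w [1,2,3,2] \<longleftrightarrow> (\<exists>a b c. a < b \<and> b < c \<and> subseq [a,b,c,b] w)"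
  using contains_length_4_iff[of "[1,2,3,2]" w] order_iso_1232_iff by auto

lemma contains_1223_iff: "contains w [1,2,2,3] \<longleftrightarrow> (\<exists>a b c. a < b \<and> b < c \<and> subseq [a,b,b,c] w)"
  using contains_length_4_iff[of "[1,2,2,3]" w] order_iso_1223_iff by auto

lemma contains_length_le: "contains w p \<Longrightarrow> length p \<le> length w"
  by (auto simp: contains_def order_iso_def dest: list_emb_length)

lemma contains_snocI: "contains w p \<Longrightarrow> contains (w @ [x]) p"
  by (auto simp: contains_def subseq_snoc_iff)

lemma contains_1221_snoc_iff:
  "contains (w @ [x]) [1,2,2,1] \<longleftrightarrow> contains w [1,2,2,1] \<or> (\<exists>b. x < b \<and> subseq [x,b,b] w)"
  unfolding contains_1221_iff by (auto simp: subseq_snoc_iff)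

lemma contains_1232_snoc_iff:
  "contains (w @ [x]) [1,2,3,2] \<longleftrightarrow> contains w [1,2,3,2] \<or> (\<exists>a c. a < x \<and> x < c \<and> subseq [a,x,c] w)"
  unfolding contains_1232_iff by (auto simp: subseq_snoc_iff)

lemma contains_1223_snoc_iff:
  "contains (w @ [x]) [1,2,2,3] \<longleftrightarrow> contains w [1,2,2,3] \<or> (\<exists>a b. a < b \<and> b < x \<and> subseq [a,b,b] w)"
  unfolding contains_1223_iff by (auto simp: subseq_snoc_iff)

section \<open>Restricted growth words\<close>

lemma is_rgw_length: "is_rgw n w \<Longrightarrow> length w = n"
  by (simp add: is_rgw_def)

lemma is_rgw_snoc_iff:
  assumes "length w = n"
  shows "is_rgw (Suc n) (w @ [x]) \<longleftrightarrow>
    is_rgw n w \<and> 1 \<le> x \<and> (if n = 0 then x = 1 else x \<le> Max (set w) + 1)"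
proof -
  have growth: "(\<forall>i. i + 1 < Suc n \<longrightarrow> (w @ [x]) ! (i + 1) \<le> Max (set (take (i + 1) (w @ [x]))) + 1)
    \<longleftrightarrow> (\<forall>i. i + 1 < n \<longrightarrow> w ! (i + 1) \<le> Max (set (take (i + 1) w)) + 1) \<and>
        (n > 0 \<longrightarrow> x \<le> Max (set w) + 1)"
  proof
    assume "\<forall>i. i + 1 < Suc n \<longrightarrow> (w @ [x]) ! (i + 1) \<le> Max (set (take (i + 1) (w @ [x]))) + 1"
    then have step: "(w @ [x]) ! (i + 1) \<le> Max (set (take (i + 1) (w @ [x]))) + 1"
      if "i + 1 \<le> n" for i
      using that by simp
    show "(\<forall>i. i + 1 < n \<longrightarrow> w ! (i + 1) \<le> Max (set (take (i + 1) w)) + 1) \<and>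
        (n > 0 \<longrightarrow> x \<le> Max (set w) + 1)"
    proof (intro conjI allI impI)
      show "w ! (i + 1) \<le> Max (set (take (i + 1) w)) + 1" if "i + 1 < n" for i
        using step[of i] that assms by (simp add: nth_append)
      show "x \<le> Max (set w) + 1" if "n > 0"
        using step[of "n - 1"] that assms by (simp add: nth_append)
    qed
  qed (use assms in \<open>auto simp: nth_append less_Suc_eq\<close>)
  show ?thesis
    using assms unfolding is_rgw_def growth by (cases n) (auto simp: nth_append)
qed

lemma is_rgw_induct [consumes 2, case_names one snoc]:
  assumes "is_rgw n w" "n \<ge> 1"
    and one: "P [1]"
    and snoc: "\<And>w x n. is_rgw n w \<Longrightarrow> n \<ge> 1 \<Longrightarrow> P w \<Longrightarrow>
      1 \<le> x \<Longrightarrow> x \<le> Max (set w) + 1 \<Longrightarrow> P (w @ [x])"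
  shows "P w"
  using assms(1,2)
proof (induction n arbitrary: w)
  case (Suc n)
  then obtain v x where w: "w = v @ [x]" and v: "length v = n"
    by (metis is_rgw_length length_Suc_conv_rev)
  show ?case
    using Suc.prems Suc.IH[of v] one snoc[of n v x] v
    unfolding w is_rgw_snoc_iff[OF v] by (cases n) auto
qed simp

lemma is_rgw_1_iff: "is_rgw 1 w \<longleftrightarrow> w = [1]"
  using is_rgw_snoc_iff[of "[]" 0] by (cases w rule: rev_cases) (auto simp: is_rgw_def)

lemma rgw_ne_Nil: "is_rgw n w \<Longrightarrow> n \<ge> 1 \<Longrightarrow> w \<noteq> []"
  using is_rgw_length by fastforce

lemma Max_set_snoc: "w \<noteq> [] \<Longrightarrow> Max (set (w @ [x])) = max (Max (set w)) x"
  by (simp add: max.commute)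

lemma set_rgw: "is_rgw n w \<Longrightarrow> n \<ge> 1 \<Longrightarrow> set w = {1..Max (set w)}"
proof (induction rule: is_rgw_induct)
  case (snoc w x n)
  define M where "M = Max (set w)"
  have "set (w @ [x]) = {1..max M x}"
    using snoc unfolding M_def[symmetric] by auto
  moreover have "Max (set (w @ [x])) = max M x"
    unfolding M_def using Max_set_snoc rgw_ne_Nil snoc.hyps by blast
  ultimately show ?case
    by (simp only:)
qed simp

lemma one_in_set_rgw: "is_rgw n w \<Longrightarrow> n \<ge> 1 \<Longrightarrow> 1 \<in> set w"
  by (induction rule: is_rgw_induct) auto

lemma in_set_rgw_iff: "is_rgw n w \<Longrightarrow> n \<ge> 1 \<Longrightarrow> x \<in> set w \<longleftrightarrow> 1 \<le> x \<and> x \<le> Max (set w)"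
  using set_rgw by fastforce

lemma rgw_first_occurrence:
  "is_rgw n w \<Longrightarrow> n \<ge> 1 \<Longrightarrow> x < y \<Longrightarrow> x \<in> set w \<Longrightarrow> subseq (y # s) w \<Longrightarrow> subseq (x # y # s) w"
proof (induction arbitrary: x y s rule: is_rgw_induct)
  case (snoc w z n)
  have y: "y \<in> set (w @ [z])"
    using snoc.prems(3) by (auto dest: list_emb_set)
  have x: "x \<in> set w"
  proof (rule ccontr)
    assume x: "x \<notin> set w"
    then have "x = z" "y \<in> set w"
      using snoc.prems(1,2) y by auto
    then have "1 \<le> x" "y \<le> Max (set w)"
      using snoc.hyps(3) by simp_all
    with x snoc.prems(1) show False
      using in_set_rgw_iff[OF snoc.hyps(1,2), of x] by linarith
  qed
  from snoc.prems(3) consider "subseq (y # s) w" | s' where "y # s = s' @ [z]" "subseq s' w"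
    by (auto simp: subseq_snoc_iff)
  then show ?case
  proof cases
    case 1
    then show ?thesis using snoc.IH[OF snoc.prems(1) x] by (auto simp: subseq_snoc_iff)
  next
    case (2 s')
    show ?thesis
    proof (cases s')
      case Nil
      with 2 x show ?thesis by (auto simp: subseq_snoc_iff subseq_singleton_left)
    next
      case (Cons y' s'')
      with 2 snoc.IH[OF snoc.prems(1) x, of s''] show ?thesis
        by (auto simp: subseq_snoc_iff)
    qed
  qed
qed simp

lemma rgw_subseq_x_b_b_iff:
  assumes w: "is_rgw n w" "n \<ge> 1" and x: "1 \<le> x"
  shows "(\<exists>b. x < b \<and> subseq [x,b,b] w) \<longleftrightarrow> (\<exists>b > x. subseq [b,b] w)"
proof
  assume "\<exists>b. x < b \<and> subseq [x,b,b] w"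
  then obtain b where "x < b" "subseq [x,b,b] w" by blast
  then show "\<exists>b > x. subseq [b,b] w"
    using subseq_Cons'[of x "[b,b]" w] by blast
next
  assume "\<exists>b > x. subseq [b,b] w"
  then obtain b where b: "x < b" "subseq [b,b] w" by blast
  then have "b \<in> set w"
    using set_mono_subseq by fastforce
  with b(1) x have "x \<in> set w"
    unfolding in_set_rgw_iff[OF w] by simp
  with b show "\<exists>b. x < b \<and> subseq [x,b,b] w"
    using rgw_first_occurrence[OF w b(1)] by blast
qed

lemma rgw_subseq_a_b_b_iff:
  assumes w: "is_rgw n w" "n \<ge> 1"
  shows "(\<exists>a b. a < b \<and> b < x \<and> subseq [a,b,b] w) \<longleftrightarrow> (\<exists>b. 1 < b \<and> b < x \<and> subseq [b,b] w)"
proof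
  assume "\<exists>a b. a < b \<and> b < x \<and> subseq [a,b,b] w"
  then obtain a b where ab: "a < b" "b < x" "subseq [a,b,b] w" by blast
  then have "a \<in> set w"
    using set_mono_subseq by fastforce
  then have "1 < b"
    using ab(1) unfolding in_set_rgw_iff[OF w] by simp
  with ab show "\<exists>b. 1 < b \<and> b < x \<and> subseq [b,b] w"
    using subseq_Cons'[of a "[b,b]" w] by blast
next
  assume "\<exists>b. 1 < b \<and> b < x \<and> subseq [b,b] w"
  then obtain b where b: "1 < b" "b < x" "subseq [b,b] w" by blast
  then have "subseq [1,b,b] w"
    using rgw_first_occurrence[OF w b(1) one_in_set_rgw[OF w]] by blast
  with b show "\<exists>a b. a < b \<and> b < x \<and> subseq [a,b,b] w"
    by blast
qed

lemma rgw_subseq_a_x_c_iff: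
  assumes w: "is_rgw n w" "n \<ge> 1"
  shows "(\<exists>a c. a < x \<and> x < c \<and> subseq [a,x,c] w) \<longleftrightarrow> 1 < x \<and> x < Max (set w)"
proof
  assume "\<exists>a c. a < x \<and> x < c \<and> subseq [a,x,c] w"
  then obtain a c where ac: "a < x" "x < c" "subseq [a,x,c] w" by blast
  then have "a \<in> set w" "c \<in> set w"
    using set_mono_subseq by fastforce+
  with ac show "1 < x \<and> x < Max (set w)"
    unfolding in_set_rgw_iff[OF w] by simp
next
  assume x: "1 < x \<and> x < Max (set w)"
  then have "x \<in> set w" "subseq [Max (set w)] w"
    unfolding subseq_singleton_left in_set_rgw_iff[OF w] by simp_all
  with x have "subseq [x, Max (set w)] w"
    using rgw_first_occurrence[OF w, of x "Max (set w)" "[]"] by blast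
  with x have "subseq [1, x, Max (set w)] w"
    using rgw_first_occurrence[OF w _ one_in_set_rgw[OF w], of x] by blast
  with x show "\<exists>a c. a < x \<and> x < c \<and> subseq [a,x,c] w"
    by blast
qed

lemma Max_rgw_le_length: "is_rgw n w \<Longrightarrow> n \<ge> 1 \<Longrightarrow> Max (set w) \<le> length w"
proof (induction rule: is_rgw_induct)
  case (snoc w x n)
  have "Max (set (w @ [x])) = max (Max (set w)) x"
    using Max_set_snoc rgw_ne_Nil snoc.hyps by blast
  with snoc show ?case
    by simp
qed simp

lemma finite_rgw: "finite {w. is_rgw n w}"
proof (rule finite_subset)
  have "set w \<subseteq> {1..n}" if "is_rgw n w" for w
  proof (cases "n = 0")
    case False
    then show ?thesis
      using that set_rgw Max_rgw_le_length is_rgw_length by fastforce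
  qed (use that is_rgw_length in auto)
  then show "{w. is_rgw n w} \<subseteq> {w. set w \<subseteq> {1..n} \<and> length w = n}"
    using is_rgw_length by blast
qed (rule finite_lists_length_eq, simp)

section \<open>Growing avoiders letter by letter\<close>

definition repeats :: "nat list \<Rightarrow> bool" where
  "repeats w \<longleftrightarrow> (\<exists>b > 1. subseq [b, b] w)"

lemma repeats_snoc_iff: "repeats (w @ [x]) \<longleftrightarrow> repeats w \<or> (1 < x \<and> x \<in> set w)"
  by (auto simp: repeats_def subseq_snoc_iff subseq_singleton_left)

definition avoiders :: "nat \<Rightarrow> nat list set \<Rightarrow> nat list set" where
  "avoiders n T = {w. is_rgw n w \<and> (\<forall>p\<in>T. \<not> contains w p)}"

lemma finite_avoiders: "finite (avoiders n T)"
  by (rule finite_subset[OF _ finite_rgw]) (auto simp: avoiders_def)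

lemma avoiders_1:
  assumes "\<And>p. p \<in> T \<Longrightarrow> 2 \<le> length p"
  shows "avoiders 1 T = {[1]}"
proof -
  have "\<not> contains [1] p" if "p \<in> T" for p
    using assms[OF that] contains_length_le[of "[1]" p] by auto
  then show ?thesis
    unfolding avoiders_def is_rgw_1_iff by auto
qed

lemma Max_avoiders_ge_1: "n \<ge> 1 \<Longrightarrow> w \<in> avoiders n T \<Longrightarrow> 1 \<le> Max (set w)"
  using one_in_set_rgw in_set_rgw_iff by (auto simp: avoiders_def)

lemma Max_set_avoiders_snoc:
  assumes "n \<ge> 1" "w \<in> avoiders n T"
  shows "Max (set (w @ [x])) = max (Max (set w)) x"
  using assms rgw_ne_Nil Max_set_snoc by (auto simp: avoiders_def)

text \<open>Non-repeating avoiders can always be continued by 1 and by a new maximum, and by no other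
  letter without creating a repetition; this is all the shared counts below use about F.\<close>

locale letter_extensions =
  fixes T :: "nat list set" and F :: "nat list \<Rightarrow> nat set"
  assumes patterns_length: "p \<in> T \<Longrightarrow> 2 \<le> length p"
    and extension_iff: "n \<ge> 1 \<Longrightarrow> w \<in> avoiders n T \<Longrightarrow> 1 \<le> x \<Longrightarrow> x \<le> Max (set w) + 1 \<Longrightarrow>
      (\<forall>p\<in>T. \<not> contains (w @ [x]) p) \<longleftrightarrow> x \<in> F w"
    and extensions_bounded: "n \<ge> 1 \<Longrightarrow> w \<in> avoiders n T \<Longrightarrow> F w \<subseteq> {1..Max (set w) + 1}"
    and nonrepeating_extensions: "n \<ge> 1 \<Longrightarrow> w \<in> avoiders n T \<Longrightarrow> \<not> repeats w \<Longrightarrow>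
      {1, Max (set w) + 1} \<subseteq> F w"
begin

abbreviation repeating :: "nat \<Rightarrow> nat list set" where
  "repeating n \<equiv> {w \<in> avoiders n T. repeats w}"

abbreviation nonrepeating :: "nat \<Rightarrow> nat list set" where
  "nonrepeating n \<equiv> {w \<in> avoiders n T. \<not> repeats w}"

lemma avoiders_Suc:
  assumes n: "n \<ge> 1"
  shows "avoiders (Suc n) T = (\<Union>w\<in>avoiders n T. (\<lambda>x. w @ [x]) ` F w)"
proof (intro equalityI subsetI)
  fix v assume v: "v \<in> avoiders (Suc n) T"
  then have "length v = Suc n"
    by (simp add: avoiders_def is_rgw_length)
  then obtain w x where vw: "v = w @ [x]" and w: "length w = n"
    by (metis length_Suc_conv_rev)
  have "is_rgw n w" "1 \<le> x" "x \<le> Max (set w) + 1"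
    using v n is_rgw_snoc_iff[OF w, of x] unfolding vw avoiders_def by auto
  moreover have "\<forall>p\<in>T. \<not> contains w p" "\<forall>p\<in>T. \<not> contains (w @ [x]) p"
    using v contains_snocI unfolding vw avoiders_def by blast+
  ultimately have "w \<in> avoiders n T" "x \<in> F w"
    using extension_iff[OF n, of w x] by (simp_all add: avoiders_def)
  then show "v \<in> (\<Union>w\<in>avoiders n T. (\<lambda>x. w @ [x]) ` F w)"
    unfolding vw by blast
next
  fix v assume "v \<in> (\<Union>w\<in>avoiders n T. (\<lambda>x. w @ [x]) ` F w)"
  then obtain w x where vw: "v = w @ [x]" and w: "w \<in> avoiders n T" and x: "x \<in> F w"
    by blast
  have "1 \<le> x" "x \<le> Max (set w) + 1"
    using extensions_bounded[OF n w] x by auto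
  moreover have "is_rgw n w"
    using w by (simp add: avoiders_def)
  ultimately have "is_rgw (Suc n) v"
    using is_rgw_snoc_iff[OF is_rgw_length, of n w x] n unfolding vw by simp
  moreover have "\<forall>p\<in>T. \<not> contains v p"
    using extension_iff[OF n w \<open>1 \<le> x\<close> \<open>x \<le> Max (set w) + 1\<close>] x unfolding vw by blast
  ultimately show "v \<in> avoiders (Suc n) T"
    by (simp add: avoiders_def)
qed

lemma finite_extensions: "n \<ge> 1 \<Longrightarrow> w \<in> avoiders n T \<Longrightarrow> finite (F w)"
  using extensions_bounded finite_subset by blast

lemma card_repeating_avoiders_Suc:
  assumes "n \<ge> 1"
  shows "card (repeating (Suc n)) = (\<Sum>w\<in>avoiders n T. card {x \<in> F w. repeats (w @ [x])})"
proof -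
  let ?R = "\<lambda>w. {x \<in> F w. repeats (w @ [x])}"
  have "repeating (Suc n) = (\<Union>w\<in>avoiders n T. (\<lambda>x. w @ [x]) ` ?R w)"
    unfolding avoiders_Suc[OF assms] by blast
  then have "card (repeating (Suc n)) = (\<Sum>v\<in>(\<Union>w\<in>avoiders n T. (\<lambda>x. w @ [x]) ` ?R w). 1)"
    by (simp only: card_eq_sum)
  also have "\<dots> = (\<Sum>w\<in>avoiders n T. \<Sum>x\<in>?R w. 1)"
    by (rule sum_UN_snoc) (use finite_avoiders finite_extensions[OF assms] in auto)
  finally show ?thesis
    by (simp only: card_eq_sum)
qed

lemma nonrepeating_avoiders_Suc:
  assumes n: "n \<ge> 1"
  shows "nonrepeating (Suc n) =
    (\<Union>w\<in>nonrepeating n. (\<lambda>x. w @ [x]) ` {1, Max (set w) + 1})"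
proof -
  have snoc_iff: "\<not> repeats (w @ [x]) \<longleftrightarrow> \<not> repeats w \<and> x \<in> {1, Max (set w) + 1}"
    if w: "w \<in> avoiders n T" and x: "x \<in> F w" for w x
  proof -
    have "is_rgw n w" "1 \<le> x" "x \<le> Max (set w) + 1"
      using w extensions_bounded[OF n w] x by (auto simp: avoiders_def)
    then show ?thesis
      using in_set_rgw_iff[OF \<open>is_rgw n w\<close> n, of x] by (auto simp: repeats_snoc_iff)
  qed
  show ?thesis
    unfolding avoiders_Suc[OF n]
    using snoc_iff nonrepeating_extensions[OF n] by blast
qed

lemma sum_nonrepeating_avoiders_Suc:
  assumes n: "n \<ge> 1"
  shows "(\<Sum>v\<in>nonrepeating (Suc n). g v) =
    (\<Sum>w\<in>nonrepeating n. g (w @ [1]) + g (w @ [Max (set w) + 1]))"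
  unfolding nonrepeating_avoiders_Suc[OF n]
  by (subst sum_UN_snoc) (auto intro!: sum.cong simp: finite_avoiders dest: Max_avoiders_ge_1[OF n])

lemma nonrepeating_avoiders_1: "nonrepeating 1 = {[1]}"
  using avoiders_1[OF patterns_length] by (auto simp: repeats_def dest: list_emb_length)

lemma card_nonrepeating_avoiders: "card (nonrepeating (Suc k)) = 2 ^ k"
proof (induction k)
  case (Suc k)
  have "card (nonrepeating (Suc (Suc k))) = (\<Sum>w\<in>nonrepeating (Suc k). 1 + 1)"
    using sum_nonrepeating_avoiders_Suc[of "Suc k" "\<lambda>_. 1::nat"] by (simp only: card_eq_sum)
  with Suc.IH show ?case
    by simp
qed (use nonrepeating_avoiders_1 in simp)

lemma sum_nonconstant_nonrepeating_avoiders: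
  "(\<Sum>w\<in>nonrepeating (Suc k). of_bool (1 < Max (set w))) + 1 = (2::nat) ^ k"
proof (induction k)
  case (Suc k)
  let ?g = "\<lambda>w. of_bool (1 < Max (set w)) :: nat"
  have "(\<Sum>w\<in>nonrepeating (Suc (Suc k)). ?g w) =
    (\<Sum>w\<in>nonrepeating (Suc k). ?g (w @ [1]) + ?g (w @ [Max (set w) + 1]))"
    by (rule sum_nonrepeating_avoiders_Suc) simp
  also have "\<dots> = (\<Sum>w\<in>nonrepeating (Suc k). ?g w + 1)"
  proof (rule sum.cong[OF refl])
    fix w assume "w \<in> nonrepeating (Suc k)"
    then have "w \<in> avoiders (Suc k) T" by simp
    then show "?g (w @ [1]) + ?g (w @ [Max (set w) + 1]) = ?g w + 1"
      using Max_set_avoiders_snoc[of "Suc k" w T] Max_avoiders_ge_1[of "Suc k" w T] by simp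
  qed
  also have "\<dots> = (\<Sum>w\<in>nonrepeating (Suc k). ?g w) + card (nonrepeating (Suc k))"
    by (simp only: sum.distrib card_eq_sum)
  finally show ?case
    using Suc.IH card_nonrepeating_avoiders[of k] by simp
qed (use nonrepeating_avoiders_1 in simp)

lemma sum_Max_nonrepeating_avoiders:
  "(\<Sum>w\<in>nonrepeating (Suc k). Max (set w) - 1) = k * 2 ^ (k - 1)"
proof (induction k)
  case (Suc k)
  let ?g = "\<lambda>w. Max (set w) - 1"
  have "(\<Sum>w\<in>nonrepeating (Suc (Suc k)). ?g w) =
    (\<Sum>w\<in>nonrepeating (Suc k). ?g (w @ [1]) + ?g (w @ [Max (set w) + 1]))"
    by (rule sum_nonrepeating_avoiders_Suc) simp
  also have "\<dots> = (\<Sum>w\<in>nonrepeating (Suc k). 2 * ?g w + 1)"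
  proof (rule sum.cong[OF refl])
    fix w assume "w \<in> nonrepeating (Suc k)"
    then have "w \<in> avoiders (Suc k) T" by simp
    then show "?g (w @ [1]) + ?g (w @ [Max (set w) + 1]) = 2 * ?g w + 1"
      using Max_set_avoiders_snoc[of "Suc k" w T] Max_avoiders_ge_1[of "Suc k" w T] by simp
  qed
  also have "\<dots> = 2 * (\<Sum>w\<in>nonrepeating (Suc k). ?g w) + card (nonrepeating (Suc k))"
    by (simp only: sum.distrib sum_distrib_left card_eq_sum)
  also have "\<dots> = Suc k * 2 ^ k"
    using Suc.IH card_nonrepeating_avoiders[of k] by (cases k) simp_all
  finally show ?case
    by simp
qed (use nonrepeating_avoiders_1 in simp)

lemma card_repeating_avoiders_1: "card (repeating 1) = 0"
proof -
  have "repeating 1 = {}"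
    using avoiders_1[OF patterns_length] by (auto simp: repeats_def dest: list_emb_length)
  then show ?thesis
    by (metis card.empty)
qed

lemma card_avoiders_eq: "card (avoiders n T) = card (repeating n) + card (nonrepeating n)"
  by (rule card_filter_partition[OF finite_avoiders])

end

section \<open>Avoiding 1221 and 1232\<close>

definition allowed_1221_1232 :: "nat list \<Rightarrow> nat set" where
  "allowed_1221_1232 w = {Max (set w), Max (set w) + 1} \<union> (if repeats w then {} else {1})"

lemma allowed_1221_1232_iff:
  assumes w: "is_rgw n w" "n \<ge> 1" and x: "1 \<le> x" "x \<le> Max (set w) + 1"
  shows "\<not> contains (w @ [x]) [1,2,2,1] \<and> \<not> contains (w @ [x]) [1,2,3,2] \<longleftrightarrow>
    \<not> contains w [1,2,2,1] \<and> \<not> contains w [1,2,3,2] \<and> x \<in> allowed_1221_1232 w"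
proof -
  have repeated_le_Max: "b \<le> Max (set w)" if "subseq [b,b] w" for b
    using that by (auto dest: list_emb_set)
  have "(\<not> (\<exists>b > x. subseq [b,b] w) \<and> \<not> (1 < x \<and> x < Max (set w))) \<longleftrightarrow> x \<in> allowed_1221_1232 w"
  proof (cases "x < Max (set w)")
    case True
    then show ?thesis
      using x(1) by (cases "x = 1") (auto simp: allowed_1221_1232_def repeats_def)
  next
    case False
    then show ?thesis
      using x(2) repeated_le_Max by (force simp: allowed_1221_1232_def)
  qed
  then show ?thesis
    unfolding contains_1221_snoc_iff contains_1232_snoc_iff
      rgw_subseq_x_b_b_iff[OF w x(1)] rgw_subseq_a_x_c_iff[OF w] by blast
qed

interpretation avoid_1221_1232: letter_extensions "{[1,2,2,1], [1,2,3,2]}" allowed_1221_1232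
proof
  fix n w x
  assume "n \<ge> 1" "w \<in> avoiders n {[1,2,2,1], [1,2,3,2]}" "1 \<le> x" "x \<le> Max (set w) + 1"
  then show "(\<forall>p\<in>{[1,2,2,1], [1,2,3,2]}. \<not> contains (w @ [x]) p) \<longleftrightarrow> x \<in> allowed_1221_1232 w"
    using allowed_1221_1232_iff[of n w x] by (simp add: avoiders_def)
next
  fix n w assume "n \<ge> 1" "w \<in> avoiders n {[1,2,2,1], [1,2,3,2]}"
  then show "allowed_1221_1232 w \<subseteq> {1..Max (set w) + 1}"
    using Max_avoiders_ge_1 by (auto simp: allowed_1221_1232_def)
qed (auto simp: allowed_1221_1232_def)

lemma card_repeating_snoc_1221_1232:
  assumes "is_rgw n w" "n \<ge> 1"
  shows "card {x \<in> allowed_1221_1232 w. repeats (w @ [x])} =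
    (if repeats w then 2 else of_bool (1 < Max (set w)))"
proof -
  define M where "M = Max (set w)"
  have "set w = {1..M}"
    using set_rgw[OF assms] unfolding M_def .
  then have "{x \<in> allowed_1221_1232 w. repeats (w @ [x])} =
    (if repeats w then {M, M + 1} else if 1 < M then {M} else {})"
    unfolding allowed_1221_1232_def M_def[symmetric] by (auto simp: repeats_snoc_iff)
  then show ?thesis
    unfolding M_def[symmetric] by simp
qed

theorem card_avoiders_1221_1232: "card (avoiders (Suc k) {[1,2,2,1], [1,2,3,2]}) = 1 + k * 2 ^ (k - 1)"
proof -
  have "card (avoid_1221_1232.repeating (Suc k)) + 2 ^ k = 1 + k * 2 ^ (k - 1)"
  proof (induction k)
    case (Suc k)
    let ?X = "avoiders (Suc k) {[1,2,2,1], [1,2,3,2]}"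
    have "card (avoid_1221_1232.repeating (Suc (Suc k))) =
      (\<Sum>w\<in>?X. card {x \<in> allowed_1221_1232 w. repeats (w @ [x])})"
      by (rule avoid_1221_1232.card_repeating_avoiders_Suc) simp
    also have "\<dots> = (\<Sum>w\<in>?X. if repeats w then 2 else of_bool (1 < Max (set w)))"
      by (intro sum.cong refl card_repeating_snoc_1221_1232) (auto simp: avoiders_def)
    also have "\<dots> = 2 * card (avoid_1221_1232.repeating (Suc k)) +
      (\<Sum>w\<in>avoid_1221_1232.nonrepeating (Suc k). of_bool (1 < Max (set w)))"
      by (simp only: sum_if_filter[OF finite_avoiders] card_eq_sum sum_distrib_left) simp
    moreover have "(2::nat) ^ Suc k = 2 * 2 ^ k" "Suc k * 2 ^ (Suc k - 1) = 2 ^ k + k * 2 ^ k"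
      by simp_all
    ultimately show ?case
      using Suc.IH avoid_1221_1232.sum_nonconstant_nonrepeating_avoiders[of k] double_mult_power_pred[of k]
      by linarith
  qed (use avoid_1221_1232.card_repeating_avoiders_1 in simp)
  then show ?thesis
    using avoid_1221_1232.card_avoiders_eq avoid_1221_1232.card_nonrepeating_avoiders by simp
qed

section \<open>Avoiding 1221 and 1223\<close>

text \<open>Two distinct letters above 1 cannot both repeat: the first occurrence of the smaller one comes
  first, so its second occurrence completes either 1221 or, preceded by 1, the pattern 1223.\<close>

lemma two_repeated_letters_contain:
  assumes "is_rgw n w" "n \<ge> 1" "1 < a" "a < b" "subseq [a,a] w" "subseq [b,b] w"
  shows "contains w [1,2,2,1] \<or> contains w [1,2,2,3]"
  using assms
proof (induction arbitrary: a b rule: is_rgw_induct)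
  case one
  then show ?case
    by (auto dest: list_emb_length)
next
  case (snoc w z n)
  consider "subseq [a,a] w" "subseq [b,b] w" | "subseq [a,a] w" "b = z" "b \<in> set w" | "a = z" "a \<in> set w"
    using snoc.prems(3,4) unfolding subseq_pair_snoc_iff by blast
  then show ?case
  proof cases
    case 1
    then show ?thesis
      using snoc.IH snoc.prems(1,2) contains_snocI by blast
  next
    case 2
    then have "subseq [1,a,a] w"
      using rgw_first_occurrence[OF snoc.hyps(1,2) snoc.prems(1) one_in_set_rgw[OF snoc.hyps(1,2)]] by blast
    with 2 snoc.prems(1,2) have "contains (w @ [z]) [1,2,2,3]"
      unfolding contains_1223_iff by (auto simp: subseq_snoc_iff)
    then show ?thesis ..
  next
    case 3
    with snoc.prems(2,4) have "subseq [b,b] w"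
      unfolding subseq_pair_snoc_iff by auto
    then have "subseq [a,b,b] w"
      using rgw_first_occurrence[OF snoc.hyps(1,2) snoc.prems(2) \<open>a \<in> set w\<close>] by blast
    with 3 snoc.prems(2) have "contains (w @ [z]) [1,2,2,1]"
      unfolding contains_1221_iff by (auto simp: subseq_snoc_iff)
    then show ?thesis ..
  qed
qed

lemma repeated_letter_unique:
  assumes w: "is_rgw n w" "n \<ge> 1" and avoid: "\<not> contains w [1,2,2,1]" "\<not> contains w [1,2,2,3]"
    and "1 < a" "1 < b" "subseq [a,a] w" "subseq [b,b] w"
  shows "a = b"
  using two_repeated_letters_contain[OF w] avoid assms(5-) by (metis linorder_neqE_nat)

definition allowed_1221_1223 :: "nat list \<Rightarrow> nat set" where
  "allowed_1221_1223 w = (if repeats w then {b. 1 < b \<and> subseq [b,b] w} else {1..Max (set w) + 1})"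

lemma allowed_1221_1223_iff:
  assumes w: "is_rgw n w" "n \<ge> 1" and x: "1 \<le> x" "x \<le> Max (set w) + 1"
  shows "\<not> contains (w @ [x]) [1,2,2,1] \<and> \<not> contains (w @ [x]) [1,2,2,3] \<longleftrightarrow>
    \<not> contains w [1,2,2,1] \<and> \<not> contains w [1,2,2,3] \<and> x \<in> allowed_1221_1223 w"
proof (cases "contains w [1,2,2,1] \<or> contains w [1,2,2,3]")
  case True
  then show ?thesis
    using contains_snocI by blast
next
  case False
  then have avoid: "\<not> contains w [1,2,2,1]" "\<not> contains w [1,2,2,3]"
    by simp_all
  have "(\<not> (\<exists>b > x. subseq [b,b] w) \<and> \<not> (\<exists>b. 1 < b \<and> b < x \<and> subseq [b,b] w)) \<longleftrightarrow>
    (\<forall>b. 1 < b \<and> subseq [b,b] w \<longrightarrow> b = x)"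
  proof
    assume "\<not> (\<exists>b > x. subseq [b,b] w) \<and> \<not> (\<exists>b. 1 < b \<and> b < x \<and> subseq [b,b] w)"
    then show "\<forall>b. 1 < b \<and> subseq [b,b] w \<longrightarrow> b = x"
      by (metis linorder_neqE_nat)
  next
    assume repeated_eq: "\<forall>b. 1 < b \<and> subseq [b,b] w \<longrightarrow> b = x"
    show "\<not> (\<exists>b > x. subseq [b,b] w) \<and> \<not> (\<exists>b. 1 < b \<and> b < x \<and> subseq [b,b] w)"
    proof safe
      fix b assume "x < b" "subseq [b,b] w"
      with x(1) repeated_eq[rule_format, of b] show False by simp
    next
      fix b assume "1 < b" "b < x" "subseq [b,b] w"
      with repeated_eq[rule_format, of b] show False by simp
    qed
  qed
  also have "\<dots> \<longleftrightarrow> x \<in> allowed_1221_1223 w"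
  proof (cases "repeats w")
    case True
    then obtain b where "1 < b" "subseq [b,b] w"
      by (auto simp: repeats_def)
    then have "{c. 1 < c \<and> subseq [c,c] w} = {b}"
      using repeated_letter_unique[OF w avoid] by blast
    with True show ?thesis
      by (auto simp: allowed_1221_1223_def)
  next
    case False
    with x show ?thesis
      by (auto simp: allowed_1221_1223_def repeats_def)
  qed
  finally show ?thesis
    unfolding contains_1221_snoc_iff contains_1223_snoc_iff
      rgw_subseq_x_b_b_iff[OF w x(1)] rgw_subseq_a_b_b_iff[OF w] using avoid by blast
qed

interpretation avoid_1221_1223: letter_extensions "{[1,2,2,1], [1,2,2,3]}" allowed_1221_1223
proof
  fix n w x
  assume "n \<ge> 1" "w \<in> avoiders n {[1,2,2,1], [1,2,2,3]}" "1 \<le> x" "x \<le> Max (set w) + 1"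
  then show "(\<forall>p\<in>{[1,2,2,1], [1,2,2,3]}. \<not> contains (w @ [x]) p) \<longleftrightarrow> x \<in> allowed_1221_1223 w"
    using allowed_1221_1223_iff[of n w x] by (simp add: avoiders_def)
next
  fix n w assume "n \<ge> 1" "w \<in> avoiders n {[1,2,2,1], [1,2,2,3]}"
  moreover have "b \<le> Max (set w) + 1" if "subseq [b,b] w" for b
  proof -
    have "b \<in> set w"
      using set_mono_subseq[OF that] by simp
    then show ?thesis
      by (simp add: le_SucI)
  qed
  ultimately show "allowed_1221_1223 w \<subseteq> {1..Max (set w) + 1}"
    by (auto simp: allowed_1221_1223_def)
qed (auto simp: allowed_1221_1223_def)

lemma card_repeating_snoc_1221_1223:
  assumes "n \<ge> 1" "w \<in> avoiders n {[1,2,2,1], [1,2,2,3]}"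
  shows "card {x \<in> allowed_1221_1223 w. repeats (w @ [x])} = (if repeats w then 1 else Max (set w) - 1)"
proof (cases "repeats w")
  case True
  then obtain b where b: "1 < b" "subseq [b,b] w"
    by (auto simp: repeats_def)
  have w: "is_rgw n w" "\<not> contains w [1,2,2,1]" "\<not> contains w [1,2,2,3]"
    using assms(2) by (simp_all add: avoiders_def)
  with b assms(1) have "{c. 1 < c \<and> subseq [c,c] w} = {b}"
    using repeated_letter_unique[of n w] by blast
  with True show ?thesis
    by (simp add: allowed_1221_1223_def repeats_snoc_iff)
next
  case False
  define M where "M = Max (set w)"
  have "set w = {1..M}"
    using set_rgw assms unfolding M_def avoiders_def by blast
  then have "{x \<in> allowed_1221_1223 w. repeats (w @ [x])} = {2..M}"
    using False unfolding allowed_1221_1223_def M_def[symmetric] by (auto simp: repeats_snoc_iff)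
  with False show ?thesis
    unfolding M_def[symmetric] by simp
qed

theorem card_avoiders_1221_1223: "card (avoiders (Suc k) {[1,2,2,1], [1,2,2,3]}) = 1 + k * 2 ^ (k - 1)"
proof -
  have "card (avoid_1221_1223.repeating (Suc k)) + 2 ^ k = 1 + k * 2 ^ (k - 1)"
  proof (induction k)
    case (Suc k)
    let ?X = "avoiders (Suc k) {[1,2,2,1], [1,2,2,3]}"
    have "card (avoid_1221_1223.repeating (Suc (Suc k))) =
      (\<Sum>w\<in>?X. card {x \<in> allowed_1221_1223 w. repeats (w @ [x])})"
      by (rule avoid_1221_1223.card_repeating_avoiders_Suc) simp
    also have "\<dots> = (\<Sum>w\<in>?X. if repeats w then 1 else Max (set w) - 1)"
      by (intro sum.cong refl card_repeating_snoc_1221_1223) simp_all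
    also have "\<dots> = card (avoid_1221_1223.repeating (Suc k)) +
      (\<Sum>w\<in>avoid_1221_1223.nonrepeating (Suc k). Max (set w) - 1)"
      by (simp only: sum_if_filter[OF finite_avoiders] card_eq_sum)
    moreover have "(2::nat) ^ Suc k = 2 * 2 ^ k" "Suc k * 2 ^ (Suc k - 1) = 2 ^ k + k * 2 ^ k"
      by simp_all
    ultimately show ?case
      using Suc.IH avoid_1221_1223.sum_Max_nonrepeating_avoiders[of k] double_mult_power_pred[of k]
      by linarith
  qed (use avoid_1221_1223.card_repeating_avoiders_1 in simp)
  then show ?thesis
    using avoid_1221_1223.card_avoiders_eq avoid_1221_1223.card_nonrepeating_avoiders by simp
qed

theorem proposition4p12:
  fixes n :: nat
  assumes "n \<ge> 1"
  shows "pn n {[1,2,2,1], [1,2,3,2]} = 1 + (n - 1) * 2 ^ (n - 2) \<and>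
         pn n {[1,2,2,1], [1,2,2,3]} = 1 + (n - 1) * 2 ^ (n - 2)"
proof -
  obtain k where n: "n = Suc k"
    using assms by (cases n) auto
  have "pn n T = card (avoiders n T)" for T
    by (simp add: pn_def avoiders_def)
  then show ?thesis
    using card_avoiders_1221_1232[of k] card_avoiders_1221_1223[of k] unfolding n by simp
qed

end
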